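(* Let $J^r:\mathbb{R}^n\to\mathbb{R}^k$ be twice continuously differentiable and $\epsilon\in[0,\infty)^k$. Let $\bar u\in\varphi^{-1}(0)$ be such that problem $(\mathrm{P}_u)$ with $u=\bar u$ has a unique solution $\bar\alpha\in\Delta_k$ and $\bar\alpha_i>0$ for all $i\in\{1,\dots,k\}$, and suppose that $(\mathrm{P}_u)$ is uniquely solvable for all $u$ in a neighborhood of $\bar u$. Then there is an open set $U\subseteq\mathbb{R}^n$ with $\bar u\in U$ such that $\varphi|_U$ is continuously differentiable.
   Context: $\Delta_k:=\{\alpha\in[0,\infty)^k:\sum_{i=1}^k\alpha_i=1\}$. $DJ^r(u)\in\mathbb{R}^{k\times n}$ is the Jacobian of $J^r$. For $u\in\mathbb{R}^n$ let $\omega_u(\alpha):=\|DJ^r(u)^\top\alpha\|_2^2-(\alpha^\top\epsilon)^2=\alpha^\top\big(DJ^r(u)DJ^r(u)^\top-\epsilon\epsilon^\top\big)\alpha$, and let $(\mathrm{P}_u)$ denote the problem $\min_{\alpha\in\Delta_k}\omega_u(\alpha)$ (a "solution" is a minimizer). Define $\varphi:\mathbb{R}^n\to\mathbb{R}$, $\varphi(u):=\min_{\alpha\in\Delta_k}\omega_u(\alpha)$. *)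

theory Defs
  imports "HOL-Analysis.Analysis"
begin

definition unit_simplex :: "(real ^ 'k) set" where
  "unit_simplex = {\<alpha>. (\<forall>i. 0 \<le> \<alpha> $ i) \<and> (\<Sum>i\<in>UNIV. \<alpha> $ i) = 1}"

definition omega :: "(real ^ 'n \<Rightarrow> real ^ 'n ^ 'k) \<Rightarrow> real ^ 'k \<Rightarrow> real ^ 'n \<Rightarrow> real ^ 'k \<Rightarrow> real" where
  "omega DJ \<epsilon> u \<alpha> = (norm (transpose (DJ u) *v \<alpha>))\<^sup>2 - (\<alpha> \<bullet> \<epsilon>)\<^sup>2"

definition solves_P :: "(real ^ 'n \<Rightarrow> real ^ 'n ^ 'k) \<Rightarrow> real ^ 'k \<Rightarrow> real ^ 'n \<Rightarrow> real ^ 'k \<Rightarrow> bool" where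
  "solves_P DJ \<epsilon> u \<alpha> \<longleftrightarrow> \<alpha> \<in> unit_simplex \<and> (\<forall>\<beta>\<in>unit_simplex. omega DJ \<epsilon> u \<alpha> \<le> omega DJ \<epsilon> u \<beta>)"

text \<open>phi(u) = min over the unit_simplex of omega_u (the minimum exists by compactness).\<close>
definition phi :: "(real ^ 'n \<Rightarrow> real ^ 'n ^ 'k) \<Rightarrow> real ^ 'k \<Rightarrow> real ^ 'n \<Rightarrow> real" where
  "phi DJ \<epsilon> u = (INF \<alpha>\<in>unit_simplex. omega DJ \<epsilon> u \<alpha>)"

definition C2_with_jacobian :: "(real ^ 'n \<Rightarrow> real ^ 'k) \<Rightarrow> (real ^ 'n \<Rightarrow> real ^ 'n ^ 'k) \<Rightarrow> bool" where
  "C2_with_jacobian J DJ \<longleftrightarrow>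
     (\<forall>u. (J has_derivative (\<lambda>h. DJ u *v h)) (at u)) \<and>
     (\<exists>D2. (\<forall>u. (DJ has_derivative blinfun_apply (D2 u)) (at u)) \<and> continuous_on UNIV D2)"

end

(* A Danskin-type argument. Near ubar the problem (P_u) has a unique minimizer a(u); since its
   graph is closed and the simplex is compact, a is continuous. Comparing omega_v at a(v) with
   omega_v at a(u) sandwiches phi(v) - phi(u) between two first-order expansions of omega in v,
   which are uniform in alpha near a(u) because J is C^2. Hence phi has the derivative
   of omega_u(alpha) in u, evaluated at alpha = a(u), and this is continuous in u. *)

theory Submission imports Defs begin

lemma is_arg_min_iff_eq_arg_min_on:
  assumes "\<exists>!\<alpha>. is_arg_min f (\<lambda>\<beta>. \<beta> \<in> K) \<alpha>"
  shows "is_arg_min f (\<lambda>\<beta>. \<beta> \<in> K) \<beta> \<longleftrightarrow> \<beta> = arg_min_on f K"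
  using assms someI_ex[OF ex1_implies_ex[OF assms]]
  unfolding arg_min_on_def arg_min_def by blast

lemma INF_eq_at_is_arg_min:
  fixes f :: "'b \<Rightarrow> real"
  assumes "is_arg_min f (\<lambda>\<beta>. \<beta> \<in> K) \<alpha>"
  shows "(INF \<beta>\<in>K. f \<beta>) = f \<alpha>"
  using assms unfolding is_arg_min_linorder by (intro cInf_eq_minimum) auto

text \<open>The graph of the minimizer is closed in \<open>V \<times> K\<close>, and \<open>K\<close> is compact.\<close>

lemma continuous_on_unique_arg_min_on:
  fixes f :: "'a::euclidean_space \<Rightarrow> 'b::euclidean_space \<Rightarrow> real"
  assumes "compact K"
    and cont: "continuous_on UNIV (\<lambda>p. f (fst p) (snd p))"
    and unique: "\<forall>u\<in>V. \<exists>!\<alpha>. is_arg_min (f u) (\<lambda>\<beta>. \<beta> \<in> K) \<alpha>"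
  shows "continuous_on V (\<lambda>u. arg_min_on (f u) K)"
proof -
  let ?a = "\<lambda>u. arg_min_on (f u) K"
  have argmin: "is_arg_min (f u) (\<lambda>\<beta>. \<beta> \<in> K) \<beta> \<longleftrightarrow> \<beta> = ?a u" if "u \<in> V" for u \<beta>
    using is_arg_min_iff_eq_arg_min_on unique[rule_format, OF that] .
  have graph: "(\<lambda>u. (u, ?a u)) ` V =
      V \<times> K \<inter> (\<Inter>\<gamma>\<in>K. {p. f (fst p) (snd p) \<le> f (fst p) \<gamma>})"
  proof (intro equalityI subsetI)
    fix p assume "p \<in> (\<lambda>u. (u, ?a u)) ` V"
    then obtain u where "u \<in> V" "p = (u, ?a u)" by blast
    then show "p \<in> V \<times> K \<inter> (\<Inter>\<gamma>\<in>K. {p. f (fst p) (snd p) \<le> f (fst p) \<gamma>})"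
      using argmin[of u "?a u"] by (simp add: is_arg_min_linorder)
  next
    fix p assume "p \<in> V \<times> K \<inter> (\<Inter>\<gamma>\<in>K. {p. f (fst p) (snd p) \<le> f (fst p) \<gamma>})"
    then obtain u \<beta> where "p = (u, \<beta>)" "u \<in> V" "\<beta> \<in> K" "\<forall>\<gamma>\<in>K. f u \<beta> \<le> f u \<gamma>"
      by fastforce
    then show "p \<in> (\<lambda>u. (u, ?a u)) ` V"
      using argmin[of u \<beta>] by (simp add: is_arg_min_linorder)
  qed
  have "closed (\<Inter>\<gamma>\<in>K. {p. f (fst p) (snd p) \<le> f (fst p) \<gamma>})"
  proof (intro closed_INT ballI closed_Collect_le cont)
    fix \<gamma>
    show "continuous_on UNIV (\<lambda>p. f (fst p) \<gamma>)"
      by (rule continuous_on_compose2[OF cont, where f="\<lambda>p. (fst p, \<gamma>)", simplified])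
        (intro continuous_intros)
  qed
  then have "closedin (top_of_set (V \<times> K)) ((\<lambda>u. (u, ?a u)) ` V)"
    unfolding graph by (rule closedin_closed_Int)
  moreover have "?a \<in> V \<rightarrow> K"
    using argmin by (auto simp: Pi_iff is_arg_min_def)
  ultimately show ?thesis
    using continuous_closed_graph_eq[OF \<open>compact K\<close>] by blast
qed

text \<open>Mean value inequality for \<open>f \<cdot> \<beta> - f' u b\<close> on a ball on which continuity keeps
  \<open>f' x \<beta>\<close> close to \<open>f' u b\<close>.\<close>

lemma uniform_first_order_estimate:
  fixes f :: "'a::real_normed_vector \<Rightarrow> 'b::metric_space \<Rightarrow> real"
    and f' :: "'a \<Rightarrow> 'b \<Rightarrow> 'a \<Rightarrow>\<^sub>L real"
  assumes deriv: "\<And>x \<beta>. ((\<lambda>y. f y \<beta>) has_derivative blinfun_apply (f' x \<beta>)) (at x)"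
    and cont: "continuous (at (u, b)) (\<lambda>p. f' (fst p) (snd p))"
    and "e > 0"
  obtains d where "d > 0"
    and "\<And>y \<beta>. norm (y - u) < d \<Longrightarrow> dist \<beta> b < d \<Longrightarrow>
           \<bar>f y \<beta> - f u \<beta> - blinfun_apply (f' u b) (y - u)\<bar> \<le> e * norm (y - u)"
proof -
  obtain d where "d > 0" and d: "\<And>p. dist p (u, b) < d \<Longrightarrow> dist (f' (fst p) (snd p)) (f' u b) < e"
    using cont \<open>e > 0\<close> unfolding continuous_at_eps_delta by fastforce
  have "\<bar>f y \<beta> - f u \<beta> - blinfun_apply (f' u b) (y - u)\<bar> \<le> e * norm (y - u)"
    if y: "norm (y - u) < d / 2" and \<beta>: "dist \<beta> b < d / 2" for y \<beta>
  proof -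
    define g where "g x = f x \<beta> - blinfun_apply (f' u b) x" for x
    have "(g has_derivative blinfun_apply (f' x \<beta> - f' u b)) (at x within ball u (d / 2))" for x
    proof -
      have "(g has_derivative (\<lambda>h. blinfun_apply (f' x \<beta>) h - blinfun_apply (f' u b) h)) (at x)"
        unfolding g_def
        by (intro has_derivative_diff deriv bounded_linear_imp_has_derivative blinfun.bounded_linear_right)
      then show ?thesis
        by (simp add: has_derivative_at_withinI minus_blinfun.rep_eq fun_diff_def)
    qed
    moreover have "onorm (blinfun_apply (f' x \<beta> - f' u b)) \<le> e" if "x \<in> ball u (d / 2)" for x
    proof -
      have "dist (x, \<beta>) (u, b) \<le> \<bar>dist x u\<bar> + \<bar>dist \<beta> b\<bar>"
        unfolding dist_Pair_Pair by (rule sqrt_sum_squares_le_sum_abs)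
      also have "\<dots> < d" using that \<beta> by (simp add: dist_commute)
      finally have "dist (f' x \<beta>) (f' u b) < e" using d[of "(x, \<beta>)"] by simp
      then show ?thesis by (simp add: norm_blinfun.rep_eq[symmetric] dist_norm)
    qed
    ultimately have "norm (g y - g u) \<le> e * norm (y - u)"
      by (intro differentiable_bound[OF convex_ball]) (use y \<open>d > 0\<close> in \<open>auto simp: dist_norm norm_minus_commute\<close>)
    then show ?thesis by (simp add: g_def blinfun.diff_right)
  qed
  then show thesis using that[of "d / 2"] \<open>d > 0\<close> by simp
qed

text \<open>Comparing with the competitors \<open>a u\<close> and \<open>a y\<close> squeezes the difference quotient
  between two uniform first-order expansions.\<close>

lemma has_derivative_optimal_value:
  fixes f :: "'a::real_normed_vector \<Rightarrow> 'b::metric_space \<Rightarrow> real"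
    and f' :: "'a \<Rightarrow> 'b \<Rightarrow> 'a \<Rightarrow>\<^sub>L real"
  assumes deriv: "\<And>x \<beta>. ((\<lambda>y. f y \<beta>) has_derivative blinfun_apply (f' x \<beta>)) (at x)"
    and cont: "continuous (at (u, a u)) (\<lambda>p. f' (fst p) (snd p))"
    and "open V" "u \<in> V" "isCont a u"
    and min: "\<And>v w. v \<in> V \<Longrightarrow> w \<in> V \<Longrightarrow> f v (a v) \<le> f v (a w)"
  shows "((\<lambda>v. f v (a v)) has_derivative blinfun_apply (f' u (a u))) (at u)"
  unfolding has_derivative_at_alt
proof (intro conjI allI impI blinfun.bounded_linear_right)
  fix e :: real assume "e > 0"
  obtain d where "d > 0" and est: "\<And>y \<beta>. norm (y - u) < d \<Longrightarrow> dist \<beta> (a u) < d \<Longrightarrow>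
      \<bar>f y \<beta> - f u \<beta> - blinfun_apply (f' u (a u)) (y - u)\<bar> \<le> e * norm (y - u)"
    using uniform_first_order_estimate[OF deriv cont \<open>e > 0\<close>] by blast
  obtain d0 where "d0 > 0" "ball u d0 \<subseteq> V"
    using \<open>open V\<close> \<open>u \<in> V\<close> open_contains_ball by blast
  obtain d1 where "d1 > 0" and d1: "\<And>y. dist y u < d1 \<Longrightarrow> dist (a y) (a u) < d"
    using \<open>isCont a u\<close> \<open>d > 0\<close> unfolding continuous_at_eps_delta by blast
  show "\<exists>\<delta>>0. \<forall>y. norm (y - u) < \<delta> \<longrightarrow>
      norm (f y (a y) - f u (a u) - blinfun_apply (f' u (a u)) (y - u)) \<le> e * norm (y - u)"
  proof (intro exI[of _ "min d (min d0 d1)"] conjI allI impI)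
    show "min d (min d0 d1) > 0"
      using \<open>d > 0\<close> \<open>d0 > 0\<close> \<open>d1 > 0\<close> by simp
  next
    fix y assume y: "norm (y - u) < min d (min d0 d1)"
    have "y \<in> V" using y \<open>ball u d0 \<subseteq> V\<close> by (auto simp: dist_norm norm_minus_commute)
    have "f y (a y) \<le> f y (a u)" "f u (a u) \<le> f u (a y)"
      using min \<open>y \<in> V\<close> \<open>u \<in> V\<close> by auto
    moreover have "dist (a y) (a u) < d"
      using d1 y by (simp add: dist_norm)
    ultimately show "norm (f y (a y) - f u (a u) - blinfun_apply (f' u (a u)) (y - u)) \<le> e * norm (y - u)"
      using est[of y "a u"] est[of y "a y"] y \<open>d > 0\<close> by (simp add: abs_le_iff)
  qed
qed

theorem continuously_differentiable_Inf_unique_arg_min: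
  fixes f :: "'a::euclidean_space \<Rightarrow> 'b::euclidean_space \<Rightarrow> real"
    and f' :: "'a \<Rightarrow> 'b \<Rightarrow> 'a \<Rightarrow>\<^sub>L real"
  assumes "open V" "compact K"
    and cont: "continuous_on UNIV (\<lambda>p. f (fst p) (snd p))"
    and deriv: "\<And>x \<beta>. ((\<lambda>y. f y \<beta>) has_derivative blinfun_apply (f' x \<beta>)) (at x)"
    and cont': "continuous_on UNIV (\<lambda>p. f' (fst p) (snd p))"
    and unique: "\<forall>u\<in>V. \<exists>!\<alpha>. is_arg_min (f u) (\<lambda>\<beta>. \<beta> \<in> K) \<alpha>"
  shows "\<forall>u\<in>V. ((\<lambda>u. INF \<beta>\<in>K. f u \<beta>) has_derivative blinfun_apply (f' u (arg_min_on (f u) K))) (at u)"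
    and "continuous_on V (\<lambda>u. f' u (arg_min_on (f u) K))"
proof -
  let ?a = "\<lambda>u. arg_min_on (f u) K"
  have is_min: "is_arg_min (f u) (\<lambda>\<beta>. \<beta> \<in> K) (?a u)" if "u \<in> V" for u
    using is_arg_min_iff_eq_arg_min_on[OF unique[rule_format, OF that]] by simp
  have min: "f v (?a v) \<le> f v (?a w)" if "v \<in> V" "w \<in> V" for v w
    using is_min[OF that(1)] is_min[OF that(2)] by (simp add: is_arg_min_linorder)
  have cont_a: "continuous_on V ?a"
    using continuous_on_unique_arg_min_on[OF \<open>compact K\<close> cont unique] .
  show "\<forall>u\<in>V. ((\<lambda>u. INF \<beta>\<in>K. f u \<beta>) has_derivative blinfun_apply (f' u (?a u))) (at u)"
  proof
    fix u assume "u \<in> V"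
    have "((\<lambda>v. f v (?a v)) has_derivative blinfun_apply (f' u (?a u))) (at u)"
    proof (rule has_derivative_optimal_value[where a = ?a, OF deriv _ \<open>open V\<close> \<open>u \<in> V\<close>])
      show "continuous (at (u, ?a u)) (\<lambda>p. f' (fst p) (snd p))"
        using cont' by (simp add: continuous_on_eq_continuous_at)
      show "isCont ?a u"
        using cont_a \<open>open V\<close> \<open>u \<in> V\<close> by (simp add: continuous_on_eq_continuous_at)
    qed (rule min)
    then show "((\<lambda>u. INF \<beta>\<in>K. f u \<beta>) has_derivative blinfun_apply (f' u (?a u))) (at u)"
      by (rule has_derivative_transform_within_open[OF _ \<open>open V\<close> \<open>u \<in> V\<close>])
        (simp add: INF_eq_at_is_arg_min[OF is_min])
  qed
  have "continuous_on V (\<lambda>u. (u, ?a u))"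
    by (intro continuous_intros cont_a)
  from continuous_on_compose2[OF cont' this]
  show "continuous_on V (\<lambda>u. f' u (?a u))"
    by simp
qed

lemma bounded_linear_vector_matrix_mult_left: "bounded_linear (\<lambda>M::real^'n^'k. b v* M)"
proof -
  have "linear (\<lambda>M::real^'n^'k. b v* M)"
    by (rule linearI)
      (simp_all add: vector_matrix_mult_def vec_eq_iff sum.distrib sum_distrib_left algebra_simps)
  then show ?thesis
    by (rule linear_conv_bounded_linear[THEN iffD1])
qed

lemma continuous_on_vector_matrix_mult [continuous_intros]:
  fixes M :: "'a::topological_space \<Rightarrow> real^'n^'k"
  assumes "continuous_on S b" "continuous_on S M"
  shows "continuous_on S (\<lambda>p. b p v* M p)"
  unfolding vector_matrix_mult_def using assms by (intro continuous_intros) auto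

definition omega_derivative ::
    "(real^'n \<Rightarrow> (real^'n) \<Rightarrow>\<^sub>L (real^'n^'k)) \<Rightarrow> (real^'n \<Rightarrow> real^'n^'k) \<Rightarrow> real^'n \<Rightarrow> real^'k \<Rightarrow>
      (real^'n) \<Rightarrow>\<^sub>L real"
  where "omega_derivative D2 DJ u \<alpha> =
    Blinfun (\<lambda>h. 2 * ((transpose (DJ u) *v \<alpha>) \<bullet> (transpose (blinfun_apply (D2 u) h) *v \<alpha>)))"

lemma omega_derivative_apply:
  "blinfun_apply (omega_derivative D2 DJ u \<alpha>) = (\<lambda>h. 2 * ((\<alpha> v* DJ u) \<bullet> (\<alpha> v* blinfun_apply (D2 u) h)))"
proof -
  have "bounded_linear (\<lambda>h. \<alpha> v* blinfun_apply (D2 u) h)"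
    by (rule bounded_linear_compose[OF bounded_linear_vector_matrix_mult_left blinfun.bounded_linear_right])
  then have "bounded_linear (\<lambda>h. 2 * ((\<alpha> v* DJ u) \<bullet> (\<alpha> v* blinfun_apply (D2 u) h)))"
    by (rule bounded_linear_compose[OF bounded_linear_mult_right
          bounded_linear_compose[OF bounded_linear_inner_right]])
  then show ?thesis
    unfolding omega_derivative_def transpose_matrix_vector by (rule bounded_linear_Blinfun_apply)
qed

lemma has_derivative_omega:
  assumes "(DJ has_derivative blinfun_apply (D2 u)) (at u)"
  shows "((\<lambda>v. omega DJ \<epsilon> v \<alpha>) has_derivative blinfun_apply (omega_derivative D2 DJ u \<alpha>)) (at u)"
proof -
  have "((\<lambda>v. \<alpha> v* DJ v) has_derivative (\<lambda>h. \<alpha> v* blinfun_apply (D2 u) h)) (at u)"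
    using bounded_linear.has_derivative[OF bounded_linear_vector_matrix_mult_left assms] .
  then have "((\<lambda>v. (\<alpha> v* DJ v) \<bullet> (\<alpha> v* DJ v) - (\<alpha> \<bullet> \<epsilon>)\<^sup>2) has_derivative
      (\<lambda>h. (\<alpha> v* DJ u) \<bullet> (\<alpha> v* blinfun_apply (D2 u) h) + (\<alpha> v* blinfun_apply (D2 u) h) \<bullet> (\<alpha> v* DJ u) - 0)) (at u)"
    by (intro has_derivative_diff has_derivative_inner has_derivative_const)
  then show ?thesis
    by (simp add: omega_def omega_derivative_apply power2_norm_eq_inner inner_commute)
qed

lemma continuous_on_omega:
  assumes "continuous_on UNIV DJ"
  shows "continuous_on UNIV (\<lambda>p. omega DJ \<epsilon> (fst p) (snd p))"
proof -
  have "continuous_on UNIV (\<lambda>p. DJ (fst p))"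
    using continuous_on_compose2[OF assms continuous_on_fst[OF continuous_on_id]] by simp
  then show ?thesis
    unfolding omega_def transpose_matrix_vector by (intro continuous_intros)
qed

lemma continuous_on_omega_derivative:
  assumes "continuous_on UNIV D2" "continuous_on UNIV DJ"
  shows "continuous_on UNIV (\<lambda>p. omega_derivative D2 DJ (fst p) (snd p))"
proof (rule continuous_on_blinfun_componentwise)
  fix h
  have "continuous_on UNIV (\<lambda>p. DJ (fst p))" "continuous_on UNIV (\<lambda>p. D2 (fst p))"
    using continuous_on_compose2[OF assms(2) continuous_on_fst[OF continuous_on_id]]
      continuous_on_compose2[OF assms(1) continuous_on_fst[OF continuous_on_id]] by simp_all
  then show "continuous_on UNIV (\<lambda>p. blinfun_apply (omega_derivative D2 DJ (fst p) (snd p)) h)"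
    unfolding omega_derivative_apply by (intro continuous_intros)
qed

lemma compact_unit_simplex: "compact (unit_simplex :: (real^'k) set)"
proof (rule compact_eq_bounded_closed[THEN iffD2, OF conjI])
  show "bounded (unit_simplex :: (real^'k) set)"
  proof (unfold bounded_iff, intro exI ballI)
    fix x :: "real^'k" assume "x \<in> unit_simplex"
    then show "norm x \<le> 1" using norm_le_l1_cart[of x] by (simp add: unit_simplex_def)
  qed
  have "unit_simplex = (\<Inter>i. {x::real^'k. 0 \<le> x $ i}) \<inter> {x. (\<Sum>i\<in>UNIV. x $ i) = 1}"
    by (auto simp: unit_simplex_def)
  moreover have "closed \<dots>"
    by (intro closed_Int closed_INT ballI closed_Collect_le closed_Collect_eq continuous_intros)
  ultimately show "closed (unit_simplex :: (real^'k) set)" by simp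
qed

lemma solves_P_iff_is_arg_min:
  "solves_P DJ \<epsilon> u \<alpha> \<longleftrightarrow> is_arg_min (omega DJ \<epsilon> u) (\<lambda>\<beta>. \<beta> \<in> unit_simplex) \<alpha>"
  by (auto simp: solves_P_def is_arg_min_linorder)

text \<open>Only the local unique solvability of \<open>(P\<^sub>u)\<close> enters the proof.\<close>

theorem mainTheorem5:
  fixes J :: "real ^ 'n \<Rightarrow> real ^ 'k"
    and DJ :: "real ^ 'n \<Rightarrow> real ^ 'n ^ 'k"
    and \<epsilon> :: "real ^ 'k"
    and ubar :: "real ^ 'n"
    and \<alpha>bar :: "real ^ 'k"
  assumes C2: "C2_with_jacobian J DJ"
    and eps_nonneg: "\<forall>i. 0 \<le> \<epsilon> $ i"
    and phi_zero: "phi DJ \<epsilon> ubar = 0"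
    and sol: "solves_P DJ \<epsilon> ubar \<alpha>bar"
    and uniq: "\<forall>\<alpha>. solves_P DJ \<epsilon> ubar \<alpha> \<longrightarrow> \<alpha> = \<alpha>bar"
    and pos: "\<forall>i. 0 < \<alpha>bar $ i"
    and nbhd: "\<exists>V. open V \<and> ubar \<in> V \<and> (\<forall>u\<in>V. \<exists>!\<alpha>. solves_P DJ \<epsilon> u \<alpha>)"
  shows "\<exists>U. open U \<and> ubar \<in> U \<and>
           (\<exists>D :: real ^ 'n \<Rightarrow> ((real ^ 'n) \<Rightarrow>\<^sub>L real).
              (\<forall>u\<in>U. (phi DJ \<epsilon> has_derivative blinfun_apply (D u)) (at u)) \<and> continuous_on U D)"
proof -
  obtain V where "open V" "ubar \<in> V" and unique: "\<forall>u\<in>V. \<exists>!\<alpha>. solves_P DJ \<epsilon> u \<alpha>"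
    using nbhd by blast
  obtain D2 where D2: "\<And>u. (DJ has_derivative blinfun_apply (D2 u)) (at u)"
    and "continuous_on UNIV D2"
    using C2 unfolding C2_with_jacobian_def by blast
  have "continuous_on UNIV DJ"
    using D2 has_derivative_continuous by (blast intro: continuous_at_imp_continuous_on)
  have "\<forall>u\<in>V. \<exists>!\<alpha>. is_arg_min (omega DJ \<epsilon> u) (\<lambda>\<beta>. \<beta> \<in> unit_simplex) \<alpha>"
    using unique by (simp add: solves_P_iff_is_arg_min)
  note danskin = continuously_differentiable_Inf_unique_arg_min[OF \<open>open V\<close> compact_unit_simplex
      continuous_on_omega[OF \<open>continuous_on UNIV DJ\<close>] has_derivative_omega[OF D2]
      continuous_on_omega_derivative[OF \<open>continuous_on UNIV D2\<close> \<open>continuous_on UNIV DJ\<close>] this]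
  have "phi DJ \<epsilon> = (\<lambda>u. INF \<beta>\<in>unit_simplex. omega DJ \<epsilon> u \<beta>)"
    by (simp add: phi_def fun_eq_iff)
  then show ?thesis
    using danskin \<open>open V\<close> \<open>ubar \<in> V\<close>
    by (intro exI[of _ V] conjI
        exI[of _ "\<lambda>u. omega_derivative D2 DJ u (arg_min_on (omega DJ \<epsilon> u) unit_simplex)"])
      simp_all
qed

end
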